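(* Let $G$ be a simple undirected connected Laplacian integral graph with Laplacian $L$, and let $u,v$ be distinct vertices with $N(u)\setminus\{v\}=N(v)\setminus\{u\}$. Let $M=(\mathbf e_u-\mathbf e_v)(\mathbf e_u-\mathbf e_v)^T$ and set $\alpha=-\tfrac34$ if $u$ and $v$ are adjacent in $G$ and $\alpha=\tfrac14$ otherwise (so that the edge between $u$ and $v$ gets weight $\tfrac14$). Then $L^\alpha=L+\alpha M$ exhibits perfect state transfer between $u$ and $v$ at time $2\pi$, and $L^\alpha$ is periodic at every other vertex at time $2\pi$.
   Context: A graph is Laplacian integral if all eigenvalues of its Laplacian $L=D-A$ are integers. $N(u)$ is the neighbourhood of $u$; $\mathbf e_u$ is the standard basis vector of $u$. For a real symmetric $H$, $U_H(t)=\exp(-itH)$; $H$ exhibits perfect state transfer between distinct $u,v$ at time $\tau$ if $U_H(\tau)\mathbf e_u=\gamma\mathbf e_v$ for some $\gamma\in\mathbb C$; $H$ is periodic at $w$ at time $\tau\ne0$ if $U_H(\tau)\mathbf e_w=\gamma\mathbf e_w$ for some $\gamma\in\mathbb C$. *)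

theory Defs
  imports "HOL-Analysis.Analysis"
begin

definition simple_graph :: "('n::finite \<Rightarrow> 'n \<Rightarrow> bool) \<Rightarrow> bool" where
  "simple_graph E \<longleftrightarrow> (\<forall>x y. E x y \<longrightarrow> E y x) \<and> (\<forall>x. \<not> E x x)"

definition connected_graph :: "('n::finite \<Rightarrow> 'n \<Rightarrow> bool) \<Rightarrow> bool" where
  "connected_graph E \<longleftrightarrow> (\<forall>x y. E\<^sup>*\<^sup>* x y)"

definition nbhd :: "('n \<Rightarrow> 'n \<Rightarrow> bool) \<Rightarrow> 'n \<Rightarrow> 'n set" where
  "nbhd E x = {y. E x y}"

definition laplacian :: "('n::finite \<Rightarrow> 'n \<Rightarrow> bool) \<Rightarrow> real^'n^'n" where
  "laplacian E = (\<chi> i j. (if i = j then real (card (nbhd E i)) else 0) - (if E i j then 1 else 0))"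

definition is_eigenvalue :: "real^'n^'n \<Rightarrow> real \<Rightarrow> bool" where
  "is_eigenvalue A lam \<longleftrightarrow> (\<exists>x. x \<noteq> 0 \<and> A *v x = lam *\<^sub>R x)"

definition laplacian_integral :: "('n::finite \<Rightarrow> 'n \<Rightarrow> bool) \<Rightarrow> bool" where
  "laplacian_integral E \<longleftrightarrow> (\<forall>lam. is_eigenvalue (laplacian E) lam \<longrightarrow> lam \<in> \<int>)"

definition matpow :: "'a::semiring_1^'n::finite^'n \<Rightarrow> nat \<Rightarrow> 'a^'n^'n" where
  "matpow A k = ((\<lambda>B. A ** B) ^^ k) (mat 1)"

definition mexp :: "complex^'n::finite^'n \<Rightarrow> complex^'n^'n" where
  "mexp A = (\<Sum>k. (1 / fact k :: real) *\<^sub>R matpow A k)"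

definition transition :: "real^'n::finite^'n \<Rightarrow> real \<Rightarrow> complex^'n^'n" where
  "transition H t = mexp (\<chi> i j. - \<i> * complex_of_real t * complex_of_real (H $ i $ j))"

definition std_basis :: "'n::finite \<Rightarrow> complex^'n" where
  "std_basis u = axis u 1"

definition perfect_state_transfer :: "real^'n::finite^'n \<Rightarrow> 'n \<Rightarrow> 'n \<Rightarrow> real \<Rightarrow> bool" where
  "perfect_state_transfer H u v \<tau> \<longleftrightarrow> u \<noteq> v \<and>
     (\<exists>\<gamma>::complex. transition H \<tau> *v std_basis u = \<gamma> *s std_basis v)"

definition periodic_at :: "real^'n::finite^'n \<Rightarrow> 'n \<Rightarrow> real \<Rightarrow> bool" where
  "periodic_at H w \<tau> \<longleftrightarrow> \<tau> \<noteq> 0 \<and>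
     (\<exists>\<gamma>::complex. transition H \<tau> *v std_basis w = \<gamma> *s std_basis w)"

end

theory Submission
  imports Defs
begin

(* With d = e_u - e_v, the twin condition makes d an eigenvector of L with the integer
   eigenvalue k = deg u + [u ~ v], and L + alpha d d^T agrees with L on the orthogonal
   complement of d while multiplying d by the half-integer k + 2 alpha. Diagonalising this
   symmetric matrix (the real spectral theorem, proved here by maximising the Rayleigh
   quotient on invariant subspaces), exp(-2 pi i (L + alpha d d^T)) is the identity on the
   complement of d and -1 on d: it is the reflection x |-> x - (d . x) d, which swaps e_u
   and e_v and fixes every other e_w. *)

section \<open>Matrix exponential\<close>

lemma matpow_0 [simp]: "matpow A 0 = mat 1"
  by (simp add: matpow_def)

lemma matpow_Suc: "matpow A (Suc k) = A ** matpow A k"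
  by (simp add: matpow_def)

lemma norm_vec_le_sum_norm: "norm (x :: 'a::real_normed_vector^'n::finite) \<le> (\<Sum>i\<in>UNIV. norm (x $ i))"
  by (simp add: norm_vec_def L2_set_le_sum)

lemma norm_matpow_entry_le:
  fixes C :: "'a::real_normed_algebra_1^'n::finite^'n"
  defines "B \<equiv> (\<Sum>i\<in>UNIV. \<Sum>j\<in>UNIV. norm (C $ i $ j)) + 1"
  shows "norm (matpow C k $ i $ j) \<le> B ^ k"
proof (induction k arbitrary: i j)
  case 0
  then show ?case by (simp add: mat_def)
next
  case (Suc k)
  have row_le: "(\<Sum>l\<in>UNIV. norm (C $ i $ l)) \<le> B"
    using member_le_sum[of i UNIV "\<lambda>i. \<Sum>j\<in>UNIV. norm (C $ i $ j)"]
    by (simp add: B_def sum_nonneg)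
  have "norm (matpow C (Suc k) $ i $ j) \<le> (\<Sum>l\<in>UNIV. norm (C $ i $ l) * norm (matpow C k $ l $ j))"
    unfolding matpow_Suc matrix_matrix_mult_def
    by (auto intro!: order_trans[OF norm_sum sum_mono] norm_mult_ineq)
  also have "\<dots> \<le> (\<Sum>l\<in>UNIV. norm (C $ i $ l)) * B ^ k"
    unfolding sum_distrib_right by (intro sum_mono mult_left_mono Suc.IH) auto
  also have "\<dots> \<le> B * B ^ k"
  proof (rule mult_right_mono[OF row_le])
    have "0 \<le> B" by (simp add: B_def sum_nonneg add_nonneg_pos)
    then show "0 \<le> B ^ k" by simp
  qed
  finally show ?case by simp
qed

lemma summable_exp_matpow:
  fixes C :: "'a::{real_normed_algebra_1,banach}^'n::finite^'n"
  shows "summable (\<lambda>k. (1 / fact k :: real) *\<^sub>R matpow C k)"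
proof -
  define B where "B = (\<Sum>i\<in>UNIV. \<Sum>j\<in>UNIV. norm (C $ i $ j)) + 1"
  define N where "N = real (CARD('n)) * real (CARD('n))"
  have norm_le: "norm (matpow C k) \<le> N * B ^ k" for k
  proof -
    have "norm (matpow C k) \<le> (\<Sum>i\<in>UNIV. \<Sum>j\<in>UNIV. norm (matpow C k $ i $ j))"
      by (rule order_trans[OF norm_vec_le_sum_norm]) (intro sum_mono norm_vec_le_sum_norm)
    also have "\<dots> \<le> (\<Sum>i\<in>(UNIV::'n set). \<Sum>j\<in>(UNIV::'n set). B ^ k)"
      by (intro sum_mono) (simp add: B_def norm_matpow_entry_le)
    finally show ?thesis by (simp add: N_def)
  qed
  have "summable (\<lambda>k. N * (inverse (fact k) * B ^ k))"
    by (intro summable_mult summable_exp)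
  then show ?thesis
    by (rule summable_comparison_test'[where N=0])
      (use norm_le in \<open>auto simp: divide_simps mult_left_mono\<close>)
qed

lemma matpow_mult_eigenvector:
  fixes C :: "'a::comm_semiring_1^'n::finite^'n"
  assumes "C *v y = c *s y"
  shows "matpow C k *v y = c ^ k *s y"
proof (induction k)
  case 0
  then show ?case by simp
next
  case (Suc k)
  have "matpow C (Suc k) *v y = C *v (c ^ k *s y)"
    by (simp add: matpow_Suc Suc.IH flip: matrix_vector_mul_assoc)
  also have "\<dots> = c ^ k *s (C *v y)"
    by (simp add: matrix_vector_mult_def vec_eq_iff sum_distrib_left algebra_simps)
  finally show ?case by (simp add: assms mult.commute)
qed

lemma bounded_linear_matrix_vector_mult_left:
  "bounded_linear (\<lambda>A :: complex^'n::finite^'m::finite. A *v y)"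
  by (rule linear_conv_bounded_linear[THEN iffD1], rule linearI)
    (simp_all add: matrix_vector_mult_def vec_eq_iff distrib_right sum.distrib scaleR_sum_right)

lemma bounded_linear_scalar_mult_vec:
  "bounded_linear (\<lambda>c :: complex. c *s (y :: complex^'n::finite))"
  by (rule linear_conv_bounded_linear[THEN iffD1], rule linearI)
    (simp_all add: vec_eq_iff algebra_simps)

lemma mexp_mult_eigenvector:
  fixes C :: "complex^'n::finite^'n"
  assumes "C *v y = c *s y"
  shows "mexp C *v y = exp c *s y"
proof -
  have "mexp C *v y = (\<Sum>k. ((1 / fact k :: real) *\<^sub>R matpow C k) *v y)"
    unfolding mexp_def
    by (rule bounded_linear.suminf[OF bounded_linear_matrix_vector_mult_left summable_exp_matpow])
  also have "\<dots> = (\<Sum>k. (c ^ k /\<^sub>R fact k) *s y)"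
  proof (rule suminf_cong)
    fix k
    show "((1 / fact k :: real) *\<^sub>R matpow C k) *v y = (c ^ k /\<^sub>R fact k) *s y"
      using matpow_mult_eigenvector[OF assms, of k]
      by (simp add: vec_eq_iff matrix_vector_mult_def inverse_eq_divide flip: scaleR_sum_right)
  qed
  also have "\<dots> = exp c *s y"
    unfolding exp_def
    by (rule bounded_linear.suminf[OF bounded_linear_scalar_mult_vec summable_exp_generic, symmetric])
  finally show ?thesis .
qed

section \<open>Spectral theorem for real symmetric matrices\<close>

lemma symmetric_matrix_inner_commute:
  fixes A :: "real^'n::finite^'n"
  assumes "transpose A = A"
  shows "(A *v x) \<bullet> y = x \<bullet> (A *v y)"
  by (metis assms dot_lmul_matrix vector_transpose_matrix)

lemma linear_coeff_zero_if_quadratic_nonpos: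
  fixes b c :: real
  assumes nonpos: "\<And>t. 2 * t * b + t\<^sup>2 * c \<le> 0"
  shows "b = 0"
proof (rule ccontr)
  assume "b \<noteq> 0"
  define a where "a = \<bar>c\<bar> + 1"
  have "a > 0" "2 * a + c > 0" by (auto simp: a_def abs_if)
  then have "0 < b\<^sup>2 * (2 * a + c) / a\<^sup>2"
    using \<open>b \<noteq> 0\<close> by (intro divide_pos_pos mult_pos_pos) auto
  also have "\<dots> = 2 * (b / a) * b + (b / a)\<^sup>2 * c"
    using \<open>a > 0\<close> by (simp add: field_simps power2_eq_square)
  finally show False using nonpos[of "b / a"] by simp
qed

lemma rayleigh_maximizer_orthogonal:
  fixes A :: "real^'n::finite^'n"
  assumes sym: "transpose A = A" and "subspace S" and x0: "x0 \<in> S" "x0 \<bullet> x0 = 1"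
    and max: "\<And>z. z \<in> S \<Longrightarrow> z \<bullet> (A *v z) \<le> (x0 \<bullet> (A *v x0)) * (z \<bullet> z)"
    and y: "y \<in> S" "y \<bullet> x0 = 0"
  shows "y \<bullet> (A *v x0) = 0"
proof (rule linear_coeff_zero_if_quadratic_nonpos)
  fix t :: real
  define lam where "lam = x0 \<bullet> (A *v x0)"
  define z where "z = x0 + t *\<^sub>R y"
  have "z \<in> S" using assms by (simp add: z_def subspace_add subspace_scale)
  have "x0 \<bullet> (A *v y) = y \<bullet> (A *v x0)"
    using symmetric_matrix_inner_commute[OF sym, of y x0] by (simp add: inner_commute)
  then have "z \<bullet> (A *v z) = lam + 2 * t * (y \<bullet> (A *v x0)) + t\<^sup>2 * (y \<bullet> (A *v y))"
    by (simp add: z_def lam_def matrix_vector_right_distrib matrix_vector_mult_scaleR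
        inner_add_left inner_add_right algebra_simps power2_eq_square)
  moreover have "z \<bullet> z = 1 + t\<^sup>2 * (y \<bullet> y)"
    using x0 y by (simp add: z_def inner_add_left inner_add_right inner_commute power2_eq_square)
  ultimately show "2 * t * (y \<bullet> (A *v x0)) + t\<^sup>2 * (y \<bullet> (A *v y) - lam * (y \<bullet> y)) \<le> 0"
    using max[OF \<open>z \<in> S\<close>] by (simp add: lam_def algebra_simps)
qed

lemma rayleigh_maximizer_eigenvector:
  fixes A :: "real^'n::finite^'n"
  assumes sym: "transpose A = A" and S: "subspace S" "\<And>x. x \<in> S \<Longrightarrow> A *v x \<in> S"
    and x0: "x0 \<in> S" "x0 \<bullet> x0 = 1"
    and max: "\<And>z. z \<in> S \<Longrightarrow> z \<bullet> (A *v z) \<le> (x0 \<bullet> (A *v x0)) * (z \<bullet> z)"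
  shows "A *v x0 = (x0 \<bullet> (A *v x0)) *\<^sub>R x0"
proof -
  define w where "w = A *v x0 - (x0 \<bullet> (A *v x0)) *\<^sub>R x0"
  have "w \<in> S" using S x0 by (simp add: w_def subspace_diff subspace_scale)
  moreover have "w \<bullet> x0 = 0"
    using x0 by (simp add: w_def inner_diff_left inner_commute[of "A *v x0" x0])
  ultimately have "w \<bullet> (A *v x0) = 0"
    using rayleigh_maximizer_orthogonal[OF sym S(1) x0 max] by blast
  with \<open>w \<bullet> x0 = 0\<close> have "w \<bullet> w = 0"
    by (simp add: w_def inner_diff_left inner_diff_right inner_commute)
  then show ?thesis by (simp add: w_def)
qed

lemma symmetric_matrix_invariant_subspace_has_eigenvector:
  fixes A :: "real^'n::finite^'n"
  assumes sym: "transpose A = A" and S: "subspace S" "S \<noteq> {0}" "\<And>x. x \<in> S \<Longrightarrow> A *v x \<in> S"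
  obtains x \<mu> where "x \<in> S" "x \<noteq> 0" "A *v x = \<mu> *\<^sub>R x"
proof -
  define K where "K = sphere 0 1 \<inter> S"
  have "compact K"
    unfolding K_def by (intro compact_Int_closed compact_sphere closed_subspace S(1))
  obtain y where "y \<in> S" "y \<noteq> 0" using S(2) subspace_0[OF S(1)] by blast
  then have "(1 / norm y) *\<^sub>R y \<in> K" using subspace_scale[OF S(1)] by (auto simp: K_def)
  then have "K \<noteq> {}" by blast
  moreover have "continuous_on K (\<lambda>x. x \<bullet> (A *v x))"
    by (intro continuous_intros)
  ultimately obtain x0 where "x0 \<in> K" and max_K: "\<And>z. z \<in> K \<Longrightarrow> z \<bullet> (A *v z) \<le> x0 \<bullet> (A *v x0)"
    using continuous_attains_sup[OF \<open>compact K\<close>] by blast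
  then have x0: "x0 \<in> S" "x0 \<bullet> x0 = 1"
    by (auto simp: K_def norm_eq_sqrt_inner)
  have max_S: "z \<bullet> (A *v z) \<le> (x0 \<bullet> (A *v x0)) * (z \<bullet> z)" if "z \<in> S" for z
  proof (cases "z = 0")
    case False
    then have "(1 / norm z) *\<^sub>R z \<in> K" using that subspace_scale[OF S(1)] by (auto simp: K_def)
    from max_K[OF this] have "z \<bullet> (A *v z) / (norm z)\<^sup>2 \<le> x0 \<bullet> (A *v x0)"
      by (simp add: matrix_vector_mult_scaleR power2_eq_square divide_simps)
    then show ?thesis using False by (simp add: power2_norm_eq_inner divide_le_eq mult.commute)
  qed simp
  have "A *v x0 = (x0 \<bullet> (A *v x0)) *\<^sub>R x0"
    by (rule rayleigh_maximizer_eigenvector[OF sym S(1) S(3) x0 max_S])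
  moreover have "x0 \<noteq> 0" using x0 by auto
  ultimately show ?thesis using that x0 by blast
qed

lemma span_eigenvectors_symmetric_matrix:
  fixes A :: "real^'n::finite^'n"
  assumes sym: "transpose A = A"
  shows "span {x. \<exists>\<mu>. A *v x = \<mu> *\<^sub>R x} = UNIV"
proof (rule ccontr)
  define Eig where "Eig = {x. \<exists>\<mu>. A *v x = \<mu> *\<^sub>R x}"
  define S where "S = {y. \<forall>w\<in>span Eig. orthogonal w y}"
  assume "span {x. \<exists>\<mu>. A *v x = \<mu> *\<^sub>R x} \<noteq> UNIV"
  then have "dim Eig < DIM(real^'n)"
    using dim_eq_full[of Eig] dim_subset_UNIV[of Eig] unfolding Eig_def by linarith
  then obtain x where "x \<noteq> 0" and "\<And>y. y \<in> span Eig \<Longrightarrow> orthogonal x y"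
    using orthogonal_to_subspace_exists by blast
  then have "x \<in> S" by (simp add: S_def orthogonal_commute)
  have "(*v) A ` Eig \<subseteq> Eig"
    by (auto simp: Eig_def matrix_vector_mult_scaleR)
  then have A_span: "A *v w \<in> span Eig" if "w \<in> span Eig" for w
    using that span_linear_image[OF matrix_vector_mul_linear, of A Eig] span_mono by blast
  have A_S: "A *v y \<in> S" if "y \<in> S" for y
  proof -
    have "w \<bullet> (A *v y) = 0" if "w \<in> span Eig" for w
      using \<open>y \<in> S\<close> A_span[OF that] symmetric_matrix_inner_commute[OF sym, of w y]
      by (simp add: S_def orthogonal_def)
    then show ?thesis by (simp add: S_def orthogonal_def)
  qed
  have "subspace S" unfolding S_def by (rule subspace_orthogonal_to_vectors)
  moreover have "S \<noteq> {0}" using \<open>x \<noteq> 0\<close> \<open>x \<in> S\<close> by blast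
  ultimately obtain z \<mu> where "z \<in> S" "z \<noteq> 0" "A *v z = \<mu> *\<^sub>R z"
    using symmetric_matrix_invariant_subspace_has_eigenvector[OF sym _ _ A_S] by blast
  then have "z \<in> span Eig" by (auto simp: Eig_def intro: span_base)
  with \<open>z \<in> S\<close> have "orthogonal z z" by (simp add: S_def)
  with \<open>z \<noteq> 0\<close> show False by (simp add: orthogonal_def)
qed

section \<open>Transition matrices\<close>

definition cvec :: "real^'n::finite \<Rightarrow> complex^'n" where
  "cvec x = (\<chi> i. complex_of_real (x $ i))"

lemma linear_cvec: "linear cvec"
  by (rule linearI) (simp_all add: cvec_def vec_eq_iff of_real_def scaleR_add_left)

lemma cvec_axis: "cvec (axis w 1) = std_basis w"
  by (simp add: cvec_def std_basis_def vec_eq_iff axis_def)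

lemma transition_mult_eigenvector:
  fixes H :: "real^'n::finite^'n"
  assumes "H *v x = \<mu> *\<^sub>R x"
  shows "transition H t *v cvec x = exp (- \<i> * of_real t * of_real \<mu>) *s cvec x"
  unfolding transition_def
proof (rule mexp_mult_eigenvector)
  have "(\<Sum>j\<in>UNIV. complex_of_real (H $ i $ j) * complex_of_real (x $ j)) = of_real \<mu> * of_real (x $ i)" for i
    using assms by (simp add: vec_eq_iff matrix_vector_mult_def flip: of_real_mult of_real_sum)
  then show "(\<chi> i j. - \<i> * complex_of_real t * complex_of_real (H $ i $ j)) *v cvec x =
    (- \<i> * complex_of_real t * complex_of_real \<mu>) *s cvec x"
    by (simp add: cvec_def vec_eq_iff matrix_vector_mult_def sum_negf mult.assoc flip: sum_distrib_left)
qed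

lemma transition_eq_linear_if_eq_on_eigenvectors:
  fixes H :: "real^'n::finite^'n"
  assumes "transpose H = H" and "linear f"
    and eig: "\<And>x \<mu>. H *v x = \<mu> *\<^sub>R x \<Longrightarrow> transition H t *v cvec x = cvec (f x)"
  shows "transition H t *v cvec x = cvec (f x)"
proof -
  have lhs: "linear (\<lambda>x. transition H t *v cvec x)"
    using linear_cvec by (rule linear_compose[unfolded o_def]) simp
  have rhs: "linear (\<lambda>x. cvec (f x))"
    using \<open>linear f\<close> linear_cvec by (rule linear_compose[unfolded o_def])
  have "x \<in> span {x. \<exists>\<mu>. H *v x = \<mu> *\<^sub>R x}"
    using span_eigenvectors_symmetric_matrix[OF assms(1)] by simp
  then show ?thesis
    by (rule linear_eq_on_span[OF lhs rhs, rotated]) (use eig in blast)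
qed

lemma exp_two_pi_int:
  assumes "\<mu> \<in> \<int>"
  shows "exp (- \<i> * complex_of_real (2 * pi) * complex_of_real \<mu>) = 1"
proof -
  have "- \<mu> \<in> \<int>" using assms by simp
  from exp_integer_2pi[OF this] show ?thesis by (simp add: mult_ac)
qed

lemma exp_two_pi_half_int:
  assumes "\<mu> - 1 / 2 \<in> \<int>"
  shows "exp (- \<i> * complex_of_real (2 * pi) * complex_of_real \<mu>) = - 1"
proof -
  have "- (\<mu> - 1 / 2) - 1 \<in> \<int>" by (rule Ints_diff[OF Ints_minus[OF assms] Ints_1])
  then have "- \<mu> - 1 / 2 \<in> \<int>" by (simp add: algebra_simps)
  from exp_integer_2pi_plus1[OF this] show ?thesis by (simp add: algebra_simps)
qed

lemma half_not_Ints: "(1 / 2 :: real) \<notin> \<int>"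
proof
  assume "(1 / 2 :: real) \<in> \<int>"
  then obtain n where "(1 / 2 :: real) = of_int n" by (auto elim: Ints_cases)
  then have "real_of_int (2 * n) = 1" by simp
  then have "2 * n = 1" by (simp only: of_int_eq_1_iff)
  then show False by presburger
qed

definition outer_prod :: "real^'n::finite \<Rightarrow> real^'n \<Rightarrow> real^'n^'n" where
  "outer_prod d e = (\<chi> i j. d $ i * e $ j)"

lemma outer_prod_mult_vec: "outer_prod d e *v x = (e \<bullet> x) *\<^sub>R d"
  by (simp add: outer_prod_def vec_eq_iff matrix_vector_mult_def inner_vec_def
      sum_distrib_left mult_ac)

lemma rank_one_update_eigenvector_cases:
  fixes L :: "real^'n::finite^'n"
  assumes sym: "transpose L = L" and Ld: "L *v d = k *\<^sub>R d"
    and Hx: "(L + \<beta> *\<^sub>R outer_prod d d) *v x = \<mu> *\<^sub>R x"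
  obtains "d \<bullet> x = 0" "L *v x = \<mu> *\<^sub>R x"
    | "d \<bullet> x \<noteq> 0" "\<mu> = k + \<beta> * (d \<bullet> d)"
      "L *v (x - (d \<bullet> x / (d \<bullet> d)) *\<^sub>R d) = \<mu> *\<^sub>R (x - (d \<bullet> x / (d \<bullet> d)) *\<^sub>R d)"
proof -
  define H where "H = L + \<beta> *\<^sub>R outer_prod d d"
  have H_mult: "H *v y = L *v y + (\<beta> * (d \<bullet> y)) *\<^sub>R d" for y
    by (simp add: H_def matrix_vector_mult_add_rdistrib outer_prod_mult_vec
        flip: scaleR_matrix_vector_assoc)
  show ?thesis
  proof (cases "d \<bullet> x = 0")
    case True
    then show ?thesis using that(1) Hx H_mult[of x] by (simp add: H_def)
  next
    case False
    have Hx': "H *v x = \<mu> *\<^sub>R x" using Hx by (simp add: H_def)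
    have "\<mu> * (d \<bullet> x) = d \<bullet> (H *v x)" by (simp add: Hx')
    also have "\<dots> = (L *v d) \<bullet> x + \<beta> * (d \<bullet> x) * (d \<bullet> d)"
      by (simp add: H_mult inner_add_right symmetric_matrix_inner_commute[OF sym])
    also have "\<dots> = (k + \<beta> * (d \<bullet> d)) * (d \<bullet> x)" by (simp add: Ld algebra_simps)
    finally have \<mu>: "\<mu> = k + \<beta> * (d \<bullet> d)" using False by simp
    have Hd: "H *v d = \<mu> *\<^sub>R d" by (simp add: H_mult Ld \<mu> algebra_simps)
    define x' where "x' = x - (d \<bullet> x / (d \<bullet> d)) *\<^sub>R d"
    have "d \<noteq> 0" using False by auto
    then have "d \<bullet> x' = 0" by (simp add: x'_def inner_diff_right)
    moreover have "H *v x' = \<mu> *\<^sub>R x'"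
      by (simp add: x'_def matrix_vector_mult_diff_distrib matrix_vector_mult_scaleR Hx' Hd
          scaleR_diff_right)
    ultimately have "L *v x' = \<mu> *\<^sub>R x'" by (simp add: H_mult)
    then show ?thesis using that(2) False \<mu> by (simp add: x'_def)
  qed
qed

lemma transition_rank_one_update_reflection:
  fixes L :: "real^'n::finite^'n"
  assumes sym: "transpose L = L" and integral: "\<And>\<nu>. is_eigenvalue L \<nu> \<Longrightarrow> \<nu> \<in> \<int>"
    and Ld: "L *v d = k *\<^sub>R d" and "k \<in> \<int>" and dd: "d \<bullet> d = 2"
    and half_int: "2 * \<beta> - 1 / 2 \<in> \<int>"
  shows "transition (L + \<beta> *\<^sub>R outer_prod d d) (2 * pi) *v cvec x = cvec (x - (d \<bullet> x) *\<^sub>R d)"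
proof (rule transition_eq_linear_if_eq_on_eigenvectors)
  show "transpose (L + \<beta> *\<^sub>R outer_prod d d) = L + \<beta> *\<^sub>R outer_prod d d"
    using sym by (simp add: outer_prod_def transpose_def vec_eq_iff mult.commute)
  show "linear (\<lambda>x. x - (d \<bullet> x) *\<^sub>R d)"
    by (simp add: linear_iff inner_add_right algebra_simps)
next
  fix y \<mu>
  assume Hy: "(L + \<beta> *\<^sub>R outer_prod d d) *v y = \<mu> *\<^sub>R y"
  let ?T = "transition (L + \<beta> *\<^sub>R outer_prod d d) (2 * pi)"
  have T_y: "?T *v cvec y = exp (- \<i> * complex_of_real (2 * pi) * complex_of_real \<mu>) *s cvec y"
    by (rule transition_mult_eigenvector[OF Hy])
  from sym Ld Hy show "?T *v cvec y = cvec (y - (d \<bullet> y) *\<^sub>R d)"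
  proof (cases rule: rank_one_update_eigenvector_cases)
    case 1
    show ?thesis
    proof (cases "y = 0")
      case False
      with 1 have "\<mu> \<in> \<int>" using integral by (auto simp: is_eigenvalue_def)
      then show ?thesis using T_y 1 by (simp only: exp_two_pi_int) simp
    qed (simp add: linear_0[OF linear_cvec])
  next
    case 2
    then have "\<mu> - 1 / 2 = k + (2 * \<beta> - 1 / 2)" by (simp add: dd)
    then have "\<mu> - 1 / 2 \<in> \<int>" using \<open>k \<in> \<int>\<close> half_int by (simp only: Ints_add)
    then have "\<mu> \<notin> \<int>" using half_not_Ints Ints_diff by fastforce
    moreover have "L *v (y - (d \<bullet> y / 2) *\<^sub>R d) = \<mu> *\<^sub>R (y - (d \<bullet> y / 2) *\<^sub>R d)"
      using 2 dd by simp
    ultimately have "y - (d \<bullet> y / 2) *\<^sub>R d = 0"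
      using integral[of \<mu>] unfolding is_eigenvalue_def by blast
    then have "2 *\<^sub>R (y - (d \<bullet> y / 2) *\<^sub>R d) = 0" by simp
    then have "2 *\<^sub>R y - (d \<bullet> y) *\<^sub>R d = 0" by (simp only: scaleR_diff_right scaleR_scaleR) simp
    then have "y - (d \<bullet> y) *\<^sub>R d = - y" by (simp add: algebra_simps scaleR_2)
    then show ?thesis using T_y \<open>\<mu> - 1 / 2 \<in> \<int>\<close>
      by (simp only: exp_two_pi_half_int) (simp add: linear_neg[OF linear_cvec])
  qed
qed

section \<open>Twin vertices\<close>

lemma laplacian_transpose: "simple_graph E \<Longrightarrow> transpose (laplacian E) = laplacian E"
  unfolding transpose_def laplacian_def vec_eq_iff simple_graph_def by auto

lemma card_nbhd_eq_if_twins: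
  assumes "simple_graph E" and twins: "nbhd E u - {v} = nbhd E v - {u}"
  shows "card (nbhd E u) = card (nbhd E v)"
proof -
  have "card (nbhd E x) = card (nbhd E x - {y}) + (if y \<in> nbhd E x then 1 else 0)"
    for x y :: 'a
    using card.remove[of "nbhd E x" y] by (cases "y \<in> nbhd E x") auto
  moreover have "v \<in> nbhd E u \<longleftrightarrow> u \<in> nbhd E v"
    using \<open>simple_graph E\<close> by (auto simp: nbhd_def simple_graph_def)
  ultimately show ?thesis using twins by metis
qed

lemma laplacian_mult_twin_difference:
  assumes "simple_graph E" and twins: "nbhd E u - {v} = nbhd E v - {u}" and "u \<noteq> v"
  shows "laplacian E *v (axis u 1 - axis v 1) =
    (real (card (nbhd E u)) + (if E u v then 1 else 0)) *\<^sub>R (axis u 1 - axis v 1)"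
proof -
  have deg: "card (nbhd E u) = card (nbhd E v)" by (rule card_nbhd_eq_if_twins[OF assms(1,2)])
  have sym: "E x y \<longleftrightarrow> E y x" and irrefl: "\<not> E x x" for x y
    using \<open>simple_graph E\<close> by (auto simp: simple_graph_def)
  have common: "E i u \<longleftrightarrow> E i v" if "i \<noteq> u" "i \<noteq> v" for i
    using twins that sym by (auto simp: nbhd_def set_eq_iff)
  show ?thesis
    unfolding matrix_vector_mult_diff_distrib matrix_vector_mult_basis vec_eq_iff
    using \<open>u \<noteq> v\<close> irrefl deg sym[of v u] common
    by (auto simp: column_def laplacian_def axis_def)
qed

theorem corollary2p6:
  fixes E :: "'n::finite \<Rightarrow> 'n \<Rightarrow> bool" and u v :: 'n
  assumes "simple_graph E" and "connected_graph E" and "laplacian_integral E"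
    and "u \<noteq> v"
    and "nbhd E u - {v} = nbhd E v - {u}"
  defines "M \<equiv> (\<chi> i j. ((if i = u then 1 else 0) - (if i = v then 1 else 0)) *
                          ((if j = u then 1 else 0) - (if j = v then 1 else 0)) :: real^'n^'n)"
    and "\<alpha> \<equiv> (if E u v then - 3 / 4 else 1 / 4 :: real)"
  shows "perfect_state_transfer (laplacian E + \<alpha> *\<^sub>R M) u v (2 * pi)
     \<and> (\<forall>w. w \<noteq> u \<and> w \<noteq> v \<longrightarrow> periodic_at (laplacian E + \<alpha> *\<^sub>R M) w (2 * pi))"
proof -
  define d :: "real^'n" where "d = axis u 1 - axis v 1"
  define k where "k = real (card (nbhd E u)) + (if E u v then 1 else 0)"
  have "M = outer_prod d d" by (simp add: M_def d_def outer_prod_def axis_def)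
  have Ld: "laplacian E *v d = k *\<^sub>R d"
    unfolding d_def k_def by (rule laplacian_mult_twin_difference[OF assms(1,5,4)])
  have "k \<in> \<int>" by (simp add: k_def)
  have "d \<bullet> d = 2"
    using \<open>u \<noteq> v\<close> by (simp add: d_def inner_diff_left inner_diff_right inner_axis_axis)
  have "2 * \<alpha> - 1 / 2 \<in> \<int>" by (simp add: \<alpha>_def)
  have integral: "\<And>\<nu>. is_eigenvalue (laplacian E) \<nu> \<Longrightarrow> \<nu> \<in> \<int>"
    using assms(3) by (simp add: laplacian_integral_def)
  have reflection:
    "transition (laplacian E + \<alpha> *\<^sub>R M) (2 * pi) *v cvec x = cvec (x - (d \<bullet> x) *\<^sub>R d)" for x
    unfolding \<open>M = outer_prod d d\<close>
    by (rule transition_rank_one_update_reflection[OF laplacian_transpose[OF assms(1)] integral Ld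
          \<open>k \<in> \<int>\<close> \<open>d \<bullet> d = 2\<close> \<open>2 * \<alpha> - 1 / 2 \<in> \<int>\<close>])
  have "transition (laplacian E + \<alpha> *\<^sub>R M) (2 * pi) *v std_basis u = std_basis v"
    using reflection[of "axis u 1"] \<open>u \<noteq> v\<close>
    by (simp add: cvec_axis d_def inner_diff_left inner_axis_axis)
  moreover have "transition (laplacian E + \<alpha> *\<^sub>R M) (2 * pi) *v std_basis w = std_basis w"
    if "w \<noteq> u" "w \<noteq> v" for w
    using reflection[of "axis w 1"] that by (simp add: cvec_axis d_def inner_diff_left inner_axis_axis)
  ultimately show ?thesis
    using \<open>u \<noteq> v\<close> unfolding perfect_state_transfer_def periodic_at_def
    by (auto intro!: exI[of _ 1])
qed

end
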